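(* Let $(\Omega',o)\to(\Omega,o)$ be a holomorphic totally geodesic embedding of pointed bounded symmetric domains, with corresponding injective Lie algebra morphism $\rho:\mathfrak g'\to\mathfrak g$, and let $p=\dim\Omega'$. Then $[\rho(\mathfrak p'^+)]\in\mathrm{Gr}(p,T_o\Omega)$ is a critical point of the function $\mathcal B\mapsto\|\Sigma(\mathcal B)\|^2$ on $\mathrm{Gr}(p,T_o\Omega)$.
   Context: A pointed bounded symmetric domain $(\Omega,o)$, $\Omega=G/K$, has data: $\mathfrak g=\mathfrak l\oplus\mathfrak p$ Cartan decomposition, $H_0$ central in $\mathfrak l$ with $\mathrm{ad}(H_0)^2$ the Cartan involution and $\mathrm{ad}(H_0)|_{\mathfrak p}$ the complex structure at $o$; $\mathfrak p^+\cong T^{1,0}_o\Omega$ is the $\sqrt{-1}$-eigenspace of $\mathrm{ad}H_0$ in $\mathfrak p^{\mathbb C}$, with Hermitian form $(\alpha,\overline\beta)_{\mathcal K}$ ($\mathcal K$ the Killing form); similarly $\mathfrak g',\mathfrak p'^+,H'_0$ for $\Omega'$. Totally geodesic holomorphic embeddings of pointed domains correspond to injective Lie algebra morphisms $\rho:\mathfrak g'\to\mathfrak g$ with $\mathrm{ad}(H_0)\rho=\rho\,\mathrm{ad}(H'_0)$; then $\rho(\mathfrak p'^+)\subset\mathfrak p^+$ is the tangent space of $\Omega'$ at $o$. $\mathrm{Gr}(p,T_o\Omega)$ is the Grassmannian of complex $p$-planes in $\mathfrak p^+$. For $\mathcal B$ with unitary basis $(e_i)$, $\Sigma(\mathcal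 B)=\sqrt{-1}\sum_i[e_i,\overline{e_i}]\in\mathfrak l^{\mathbb C}$, and $\|\cdot\|$ is the norm on $\mathfrak l^{\mathbb C}$ from $(\lambda,\overline\mu)_{\mathcal K}$. *)

theory Defs
  imports "HOL-Analysis.Analysis"
begin

text \<open>The complexified Lie algebra g^C is modelled as complex^'n (coordinates in a fixed
basis) with a complex-bilinear bracket br and the complex conjugation cj with respect to
the real form g = {x. cj x = x}.\<close>

definition lie_bracket :: "('a::field^'n \<Rightarrow> 'a^'n \<Rightarrow> 'a^'n) \<Rightarrow> bool" where
  "lie_bracket br \<longleftrightarrow>
     (\<forall>x y z. br (x + y) z = br x z + br y z) \<and>
     (\<forall>c x y. br (c *s x) y = c *s br x y) \<and>
     (\<forall>x y. br x y = - br y x) \<and>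
     (\<forall>x y z. br x (br y z) + br y (br z x) + br z (br x y) = 0)"

definition real_structure ::
  "(complex^'n \<Rightarrow> complex^'n \<Rightarrow> complex^'n) \<Rightarrow> (complex^'n \<Rightarrow> complex^'n) \<Rightarrow> bool" where
  "real_structure br cj \<longleftrightarrow>
     (\<forall>x y. cj (x + y) = cj x + cj y) \<and>
     (\<forall>c x. cj (c *s x) = cnj c *s cj x) \<and>
     (\<forall>x. cj (cj x) = x) \<and>
     (\<forall>x y. cj (br x y) = br (cj x) (cj y))"

text \<open>Killing form K(x,y) = trace(ad x o ad y), written out in the standard basis.\<close>
definition killing ::
  "('a::comm_ring_1^'n \<Rightarrow> 'a^'n \<Rightarrow> 'a^'n) \<Rightarrow> 'a^'n \<Rightarrow> 'a^'n \<Rightarrow> 'a" where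
  "killing br x y = (\<Sum>i\<in>UNIV. (br x (br y (axis i 1))) $ i)"

text \<open>Data of a pointed bounded symmetric domain: Lie algebra g (via g^C, cj), Cartan
decomposition g = l + p (complexified: L, P), and H0 central in l whose adjoint action
restricted to p is a complex structure.\<close>
definition bsd_data ::
  "(complex^'n \<Rightarrow> complex^'n \<Rightarrow> complex^'n) \<Rightarrow> (complex^'n \<Rightarrow> complex^'n) \<Rightarrow>
   (complex^'n) set \<Rightarrow> (complex^'n) set \<Rightarrow> complex^'n \<Rightarrow> bool" where
  "bsd_data br cj L P H0 \<longleftrightarrow>
     lie_bracket br \<and> real_structure br cj \<and>
     (\<forall>x. (\<forall>y. killing br x y = 0) \<longrightarrow> x = 0) \<and>
     vec.subspace L \<and> vec.subspace P \<and> cj ` L \<subseteq> L \<and> cj ` P \<subseteq> P \<and>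
     L \<inter> P = {0} \<and> (\<forall>x. \<exists>a\<in>L. \<exists>b\<in>P. x = a + b) \<and>
     (\<forall>x\<in>L. \<forall>y\<in>L. br x y \<in> L) \<and>
     (\<forall>x\<in>L. \<forall>y\<in>P. br x y \<in> P) \<and>
     (\<forall>x\<in>P. \<forall>y\<in>P. br x y \<in> L) \<and>
     (\<forall>x\<in>L. cj x = x \<and> x \<noteq> 0 \<longrightarrow> Re (killing br x x) < 0) \<and>
     (\<forall>x\<in>P. cj x = x \<and> x \<noteq> 0 \<longrightarrow> Re (killing br x x) > 0) \<and>
     H0 \<in> L \<and> cj H0 = H0 \<and>
     (\<forall>x\<in>L. br H0 x = 0) \<and>
     (\<forall>x\<in>P. br H0 (br H0 x) = - x)"

definition pplus ::
  "(complex^'n \<Rightarrow> complex^'n \<Rightarrow> complex^'n) \<Rightarrow> (complex^'n) set \<Rightarrow> complex^'n \<Rightarrow> (complex^'n) set" where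
  "pplus br P H0 = {x\<in>P. br H0 x = \<i> *s x}"

definition Gr ::
  "nat \<Rightarrow> (complex^'n \<Rightarrow> complex^'n \<Rightarrow> complex^'n) \<Rightarrow> (complex^'n) set \<Rightarrow> complex^'n \<Rightarrow> (complex^'n) set set" where
  "Gr p br P H0 = {B. vec.subspace B \<and> B \<subseteq> pplus br P H0 \<and> vec.dim B = p}"

definition unitary_basis ::
  "(complex^'n \<Rightarrow> complex^'n \<Rightarrow> complex^'n) \<Rightarrow> (complex^'n \<Rightarrow> complex^'n) \<Rightarrow>
   (complex^'n) set \<Rightarrow> nat \<Rightarrow> (nat \<Rightarrow> complex^'n) \<Rightarrow> bool" where
  "unitary_basis br cj B p e \<longleftrightarrow>
     vec.span (e ` {..<p}) = B \<and>
     (\<forall>j<p. \<forall>k<p. killing br (e j) (cj (e k)) = (if j = k then 1 else 0))"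

text \<open>Sigma(B) = sqrt(-1) * sum_i [e_i, conj e_i] for a unitary basis (e_i) of B
(independent of the choice of unitary basis).\<close>
definition Sigma ::
  "(complex^'n \<Rightarrow> complex^'n \<Rightarrow> complex^'n) \<Rightarrow> (complex^'n \<Rightarrow> complex^'n) \<Rightarrow>
   (complex^'n) set \<Rightarrow> complex^'n" where
  "Sigma br cj B =
     (let p = vec.dim B; e = (SOME e. unitary_basis br cj B p e)
      in \<i> *s (\<Sum>k<p. br (e k) (cj (e k))))"

text \<open>Squared norm on l^C coming from the Hermitian form (lambda, conj mu)_K, which is
negative definite on l^C; we take the sign making it a norm.\<close>
definition lnormsq ::
  "(complex^'n \<Rightarrow> complex^'n \<Rightarrow> complex^'n) \<Rightarrow> (complex^'n \<Rightarrow> complex^'n) \<Rightarrow> complex^'n \<Rightarrow> real" where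
  "lnormsq br cj x = - Re (killing br x (cj x))"

definition Gr_critical ::
  "nat \<Rightarrow> (complex^'n \<Rightarrow> complex^'n \<Rightarrow> complex^'n) \<Rightarrow> (complex^'n) set \<Rightarrow> complex^'n \<Rightarrow>
   ((complex^'n) set \<Rightarrow> real) \<Rightarrow> (complex^'n) set \<Rightarrow> bool" where
  "Gr_critical p br P H0 F B \<longleftrightarrow>
     B \<in> Gr p br P H0 \<and>
     (\<forall>v :: real \<Rightarrow> nat \<Rightarrow> complex^'n.
        (\<forall>t. \<forall>k<p. v t k \<in> pplus br P H0) \<and>
        (\<forall>t. inj_on (v t) {..<p} \<and> vec.independent (v t ` {..<p})) \<and>
        vec.span (v 0 ` {..<p}) = B \<and>
        (\<forall>k<p. (\<lambda>t. v t k) differentiable (at 0))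
        \<longrightarrow> ((\<lambda>t. F (vec.span (v t ` {..<p}))) has_real_derivative 0) (at 0))"

end

theory Submission
  imports Defs
begin

text \<open>
  Let F(B) = ||Sigma(B)||^2. Along a differentiable curve of p-planes through B, Gram-Schmidt
  yields a differentiable unitary frame e(t) with derivative d at 0, and Sigma(t) =
  i sum_k [e_k, conj e_k] stays in the real form, so F' = -2 Re K(Sigma', Sigma(B)).
  Differentiating the orthonormality relations gives (d_k, e_j) + (e_k, d_j) = 0. By invariance
  of the Killing form, K(Sigma', X) for a real X is then a difference of two double sums over
  the matrix of ad X on B, which agree as soon as ad X preserves B (the matrix is then
  skew-Hermitian). So every p-plane normalised by its own Sigma is critical.

  For B = rho(p'^+) we compute Sigma(B) with a unitary basis rho(f_k): it is rho(X') with
  X' = i sum_k [f_k, conj f_k] in l', and [l', p'^+] lies in p'^+, so Sigma(B) preserves B.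
\<close>

section \<open>The Killing form\<close>

lemma matrix_diff_mult: "(A - B) ** C = A ** C - B ** C"
  for A B :: "'a::ring_1^'n^'m" and C :: "'a^'k^'n"
  by (vector matrix_matrix_mult_def sum_subtractf left_diff_distrib)

lemma matrix_mult_diff: "C ** (A - B) = C ** A - C ** B"
  for A B :: "'a::ring_1^'n^'m" and C :: "'a^'m^'k"
  by (vector matrix_matrix_mult_def sum_subtractf right_diff_distrib)

locale lie_algebra =
  fixes br :: "'a::field^'n \<Rightarrow> 'a^'n \<Rightarrow> 'a^'n"
  assumes lie_bracket: "lie_bracket br"
begin

lemma bracket_add_left: "br (x + y) z = br x z + br y z"
  and bracket_scale_left: "br (c *s x) y = c *s br x y"
  and bracket_antisym: "br x y = - br y x"
  and jacobi: "br x (br y z) + br y (br z x) + br z (br x y) = 0"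
  using lie_bracket unfolding lie_bracket_def by blast+

lemma linear_bracket_left: "Vector_Spaces.linear (*s) (*s) (\<lambda>x. br x y)"
  by unfold_locales (simp_all add: bracket_add_left bracket_scale_left)

lemma linear_bracket_right: "Vector_Spaces.linear (*s) (*s) (br x)"
  by unfold_locales (metis bracket_antisym bracket_add_left minus_add_distrib,
      metis bracket_antisym bracket_scale_left vector_smult_rneg)

lemma bracket_add_right: "br z (x + y) = br z x + br z y"
  by (rule vec.linear_add[OF linear_bracket_right])
lemma bracket_scale_right: "br y (c *s x) = c *s br y x"
  by (rule vec.linear_scale[OF linear_bracket_right])
lemma bracket_diff_left: "br (x - y) z = br x z - br y z"
  by (rule vec.linear_diff[OF linear_bracket_left])
lemma bracket_diff_right: "br z (x - y) = br z x - br z y"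
  by (rule vec.linear_diff[OF linear_bracket_right])
lemma bracket_minus_left: "br (- x) z = - br x z"
  by (rule vec.linear_neg[OF linear_bracket_left])
lemma bracket_minus_right: "br z (- x) = - br z x"
  by (rule vec.linear_neg[OF linear_bracket_right])
lemma bracket_zero_left [simp]: "br 0 z = 0"
  by (rule vec.linear_0[OF linear_bracket_left])
lemma bracket_zero_right [simp]: "br z 0 = 0"
  by (rule vec.linear_0[OF linear_bracket_right])
lemma bracket_sum_left: "br (\<Sum>i\<in>A. f i) z = (\<Sum>i\<in>A. br (f i) z)"
  by (rule vec.linear_sum[OF linear_bracket_left])
lemma bracket_sum_right: "br z (\<Sum>i\<in>A. f i) = (\<Sum>i\<in>A. br z (f i))"
  by (rule vec.linear_sum[OF linear_bracket_right])

lemma bracket_bracket_left: "br (br x y) z = br x (br y z) - br y (br x z)"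
  using jacobi[of x y z] bracket_antisym[of z "br x y"] bracket_antisym[of z x]
  by (simp add: bracket_minus_right algebra_simps eq_neg_iff_add_eq_0)

lemma killing_eq_trace: "killing br x y = trace (matrix (br x) ** matrix (br y))"
proof -
  have "killing br x y = trace (matrix (br x \<circ> br y))"
    by (simp add: killing_def trace_def matrix_def)
  then show ?thesis
    by (simp add: matrix_compose_gen[OF linear_bracket_right linear_bracket_right])
qed

lemma killing_sym: "killing br x y = killing br y x"
  unfolding killing_eq_trace by (rule trace_mul_sym)

lemma matrix_bracket_bracket:
  "matrix (br (br x y)) = matrix (br x) ** matrix (br y) - matrix (br y) ** matrix (br x)"
proof -
  have "matrix (br (br x y)) *v z
      = (matrix (br x) ** matrix (br y) - matrix (br y) ** matrix (br x)) *v z" for z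
    by (simp add: matrix_works linear_bracket_right matrix_vector_mult_diff_rdistrib
        bracket_bracket_left flip: matrix_vector_mul_assoc)
  then show ?thesis by (simp add: matrix_eq)
qed

lemma killing_invariant: "killing br (br x y) z = killing br x (br y z)"
proof -
  define X Y Z where "X = matrix (br x)" and "Y = matrix (br y)" and "Z = matrix (br z)"
  have "killing br (br x y) z = trace (X ** Y ** Z) - trace (Y ** X ** Z)"
    by (simp add: killing_eq_trace matrix_bracket_bracket matrix_diff_mult trace_sub
        X_def Y_def Z_def)
  also have "trace (Y ** X ** Z) = trace (X ** (Z ** Y))"
    by (metis trace_mul_sym matrix_mul_assoc)
  also have "trace (X ** Y ** Z) - trace (X ** (Z ** Y)) = killing br x (br y z)"
    by (simp add: killing_eq_trace matrix_bracket_bracket matrix_mult_diff trace_sub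
        matrix_mul_assoc
        X_def Y_def Z_def)
  finally show ?thesis .
qed

lemma killing_add_left: "killing br (x + y) z = killing br x z + killing br y z"
  and killing_add_right: "killing br z (x + y) = killing br z x + killing br z y"
  and killing_scale_left: "killing br (c *s x) z = c * killing br x z"
  and killing_scale_right: "killing br z (c *s x) = c * killing br z x"
  and killing_minus_right: "killing br z (- x) = - killing br z x"
  and killing_diff_right: "killing br z (x - y) = killing br z x - killing br z y"
  and killing_sum_left: "killing br (\<Sum>i\<in>A. f i) z = (\<Sum>i\<in>A. killing br (f i) z)"
  by (simp_all add: killing_def bracket_add_left bracket_add_right bracket_scale_left
      bracket_scale_right bracket_minus_left bracket_minus_right bracket_diff_left
      bracket_diff_right bracket_sum_left sum.distrib sum_distrib_left sum_negf sum_subtractf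
      sum_component) (rule sum.swap)

end

definition conj_vec :: "complex^'n \<Rightarrow> complex^'n" where
  "conj_vec x = (\<chi> i. cnj (x $ i))"

definition conj_mat :: "complex^'m^'n \<Rightarrow> complex^'m^'n" where
  "conj_mat A = (\<chi> i j. cnj (A $ i $ j))"

lemma conj_vec_conj_vec [simp]: "conj_vec (conj_vec x) = x"
  by (simp add: conj_vec_def vec_eq_iff)

lemma conj_vec_add: "conj_vec (x + y) = conj_vec x + conj_vec y"
  by (simp add: conj_vec_def vec_eq_iff)

lemma conj_vec_scale: "conj_vec (c *s x) = cnj c *s conj_vec x"
  by (simp add: conj_vec_def vec_eq_iff)

lemma conj_mat_conj_mat [simp]: "conj_mat (conj_mat A) = A"
  by (simp add: conj_mat_def vec_eq_iff)

lemma conj_mat_mat [simp]: "conj_mat (mat 1) = mat 1"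
  by (simp add: conj_mat_def mat_def vec_eq_iff)

lemma conj_vec_mult: "conj_vec (A *v x) = conj_mat A *v conj_vec x"
  by (simp add: conj_vec_def conj_mat_def matrix_vector_mult_def vec_eq_iff)

lemma conj_mat_mult: "conj_mat (A ** B) = conj_mat A ** conj_mat B"
  by (simp add: conj_mat_def matrix_matrix_mult_def vec_eq_iff)

lemma trace_conj_mat: "trace (conj_mat A) = cnj (trace A)"
  by (simp add: conj_mat_def trace_def)

locale real_form = lie_algebra br for br :: "complex^'n \<Rightarrow> complex^'n \<Rightarrow> complex^'n" +
  fixes cj :: "complex^'n \<Rightarrow> complex^'n"
  assumes real_structure: "real_structure br cj"
begin

lemma conj_add: "cj (x + y) = cj x + cj y"
  and conj_scale: "cj (c *s x) = cnj c *s cj x"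
  and conj_conj [simp]: "cj (cj x) = x"
  and conj_bracket: "cj (br x y) = br (cj x) (cj y)"
  using real_structure unfolding real_structure_def by blast+

lemma linear_conj_conj_vec: "Vector_Spaces.linear (*s) (*s) (\<lambda>x. cj (conj_vec x))"
  by unfold_locales (simp_all add: conj_vec_add conj_vec_scale conj_add conj_scale)

lemma conj_zero [simp]: "cj 0 = 0"
  by (metis conj_scale complex_cnj_zero vector_smult_lzero)

lemma conj_minus: "cj (- x) = - cj x"
  using conj_scale[of "-1" x] by (simp only: vector_sneg_minus1 complex_cnj_minus complex_cnj_one)

lemma conj_diff: "cj (x - y) = cj x - cj y"
  by (simp only: diff_conv_add_uminus conj_add conj_minus)

lemma conj_sum: "cj (\<Sum>i\<in>A. f i) = (\<Sum>i\<in>A. cj (f i))"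
proof (induction A rule: infinite_finite_induct)
  case (insert i A)
  then show ?case by (simp add: conj_add)
qed simp_all

text \<open>
  The antilinear map cj is conj_matrix composed with entrywise conjugation. Hence conjugating
  ad x ad y (matrix M) by cj gives the matrix C conj(M) conj(C), whose trace is conj(trace M)
  because conj(C) C = 1.
\<close>

definition conj_matrix :: "complex^'n^'n" where
  "conj_matrix = matrix (\<lambda>x. cj (conj_vec x))"

lemma conj_eq_matrix: "cj x = conj_matrix *v conj_vec x"
  by (simp add: conj_matrix_def matrix_works[OF linear_conj_conj_vec])

lemma conj_matrix_inverse: "conj_mat conj_matrix ** conj_matrix = mat 1"
proof -
  have "(conj_matrix ** conj_mat conj_matrix) *v z = mat 1 *v z" for z
  proof -
    have "conj_matrix *v conj_vec (conj_matrix *v conj_vec z) = z"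
      using conj_conj[of z] by (simp only: conj_eq_matrix)
    then show ?thesis by (simp add: conj_vec_mult matrix_vector_mul_assoc)
  qed
  then have "conj_matrix ** conj_mat conj_matrix = mat 1" by (simp add: matrix_eq)
  then show ?thesis by (metis conj_mat_mult conj_mat_conj_mat conj_mat_mat)
qed

lemma killing_conj: "killing br (cj x) (cj y) = cnj (killing br x y)"
proof -
  define M where "M = matrix (br x) ** matrix (br y)"
  have ad_ad: "br u (br v z) = (matrix (br u) ** matrix (br v)) *v z" for u v z
    by (simp add: matrix_works linear_bracket_right flip: matrix_vector_mul_assoc)
  have "(matrix (br (cj x)) ** matrix (br (cj y))) *v z
      = (conj_matrix ** conj_mat M ** conj_mat conj_matrix) *v z" for z
  proof -
    have "(matrix (br (cj x)) ** matrix (br (cj y))) *v z = cj (br x (br y (cj z)))"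
      by (simp add: conj_bracket flip: ad_ad)
    also have "\<dots> = cj (M *v cj z)" by (simp add: M_def ad_ad)
    also have "\<dots> = (conj_matrix ** conj_mat M ** conj_mat conj_matrix) *v z"
      by (simp add: conj_eq_matrix conj_vec_mult conj_mat_mult matrix_vector_mul_assoc
          matrix_mul_assoc)
    finally show ?thesis .
  qed
  then have "matrix (br (cj x)) ** matrix (br (cj y))
      = conj_matrix ** conj_mat M ** conj_mat conj_matrix"
    by (simp add: matrix_eq)
  then have "killing br (cj x) (cj y) = trace (conj_matrix ** (conj_mat M ** conj_mat conj_matrix))"
    by (simp add: killing_eq_trace matrix_mul_assoc)
  also have "\<dots> = trace (conj_mat M ** conj_mat conj_matrix ** conj_matrix)"
    by (rule trace_mul_sym)
  also have "\<dots> = cnj (killing br x y)"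
    by (simp add: conj_matrix_inverse trace_conj_mat killing_eq_trace M_def flip: matrix_mul_assoc)
  finally show ?thesis .
qed

end

section \<open>Hermitian forms and Gram-Schmidt orthonormalisation\<close>

lemma scaleR_eq_of_real_scale: "r *\<^sub>R x = (of_real r :: 'a) *s x"
  for x :: "'a::real_algebra_1^'n"
  by (simp add: vec_eq_iff) (simp add: scaleR_conv_of_real)

lemma span_insert_scale:
  assumes "c \<noteq> 0"
  shows "vec.span (insert (c *s u) S) = vec.span (insert u S)"
proof -
  have "u = inverse c *s (c *s u)"
    using assms by (simp add: vector_smult_assoc)
  then have "u \<in> vec.span (insert (c *s u) S)"
    by (metis vec.span_base vec.span_scale insertI1)
  then show ?thesis
    unfolding vec.span_eq
    by (auto intro: vec.span_base vec.span_scale)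
qed

lemma span_insert_cong:
  "vec.span S = vec.span T \<Longrightarrow> vec.span (insert u S) = vec.span (insert u T)"
  by (simp add: vec.span_insert)

lemma (in bounded_bilinear) differentiable:
  "f differentiable (at x within s) \<Longrightarrow> g differentiable (at x within s) \<Longrightarrow>
    (\<lambda>x. prod (f x) (g x)) differentiable (at x within s)"
  unfolding differentiable_def by (blast intro: FDERIV)

lemma bounded_bilinear_vector_scale: "bounded_bilinear (\<lambda>(c::complex) (x::complex^'n). c *s x)"
  unfolding bilinear_conv_bounded_bilinear[symmetric] bilinear_def
  by (auto intro!: linearI simp: scaleR_eq_of_real_scale scaleR_conv_of_real vector_add_ldistrib
      vector_sadd_rdistrib vector_smult_assoc)

lemma independent_not_in_span_prefix:
  fixes w :: "nat \<Rightarrow> 'a::field^'n"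
  assumes "vec.independent (w ` {..<p})" and "inj_on w {..<p}" and "k < p"
  shows "w k \<notin> vec.span (w ` {..<k})"
proof
  assume "w k \<in> vec.span (w ` {..<k})"
  moreover have "w ` {..<k} \<subseteq> w ` {..<p} - {w k}"
  proof
    fix x assume "x \<in> w ` {..<k}"
    then obtain i where "i < k" "x = w i" by blast
    with assms(3) have "i < p" "i \<noteq> k" by auto
    with assms(2,3) \<open>x = w i\<close> show "x \<in> w ` {..<p} - {w k}"
      by (auto simp: inj_on_eq_iff)
  qed
  ultimately have "w k \<in> vec.span (w ` {..<p} - {w k})"
    using vec.span_mono by blast
  then show False
    using assms(1,3) unfolding vec.dependent_def by blast
qed

locale hermitian_form =
  fixes h :: "complex^'n \<Rightarrow> complex^'n \<Rightarrow> complex"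
  assumes add_left: "h (x + y) z = h x z + h y z"
    and scale_left: "h (c *s x) z = c * h x z"
    and hermitian: "h y x = cnj (h x y)"
begin

lemma add_right: "h z (x + y) = h z x + h z y"
proof -
  have "h z (x + y) = cnj (h x z) + cnj (h y z)"
    by (simp add: hermitian[where y=z and x="x + y"] add_left)
  then show ?thesis by (simp only: hermitian[where y=z and x=x] hermitian[where y=z and x=y])
qed

lemma scale_right: "h z (c *s x) = cnj c * h z x"
proof -
  have "h z (c *s x) = cnj c * cnj (h x z)"
    by (simp add: hermitian[where y=z and x="c *s x"] scale_left)
  then show ?thesis by (simp only: hermitian[where y=z and x=x])
qed

lemma zero_left [simp]: "h 0 z = 0"
  using scale_left[of 0 0 z] by simp

lemma zero_right [simp]: "h z 0 = 0"
  using scale_right[of z 0 0] by simp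

lemma diff_left: "h (x - y) z = h x z - h y z"
  using add_left[of "x - y" y z] by (simp add: algebra_simps)

lemma sum_left: "h (\<Sum>i\<in>A. f i) z = (\<Sum>i\<in>A. h (f i) z)"
  by (induction A rule: infinite_finite_induct) (simp_all add: add_left)

lemma sum_right: "h z (\<Sum>i\<in>A. f i) = (\<Sum>i\<in>A. h z (f i))"
  by (induction A rule: infinite_finite_induct) (simp_all add: add_right)

lemma diag_real: "h x x = of_real (Re (h x x))"
  using hermitian[of x x] by (simp add: complex_eq_iff)

lemma bounded_bilinear: "bounded_bilinear h"
proof -
  have "linear (h x)" for x
    by (rule linearI)
      (simp_all add: add_right scale_right scaleR_eq_of_real_scale scaleR_conv_of_real)
  moreover have "linear (\<lambda>x. h x y)" for y
    by (rule linearI)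
      (simp_all add: add_left scale_left scaleR_eq_of_real_scale scaleR_conv_of_real)
  ultimately show ?thesis
    by (simp add: bilinear_def flip: bilinear_conv_bounded_bilinear)
qed

definition orthonormal :: "nat \<Rightarrow> (nat \<Rightarrow> complex^'n) \<Rightarrow> bool" where
  "orthonormal p e \<longleftrightarrow> (\<forall>j<p. \<forall>k<p. h (e j) (e k) = (if j = k then 1 else 0))"

lemma orthonormal_expansion:
  assumes "orthonormal p e" and "y \<in> vec.span (e ` {..<p})"
  shows "y = (\<Sum>j<p. h y (e j) *s e j)"
proof -
  let ?coord = "\<lambda>y. (\<Sum>j<p. h y (e j) *s e j)"
  have "vec.subspace {y. ?coord y = y}"
  proof (unfold vec.subspace_def, safe)
    fix x y c assume "?coord x = x" "?coord y = y"
    have "?coord (x + y) = ?coord x + ?coord y"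
      by (simp add: add_left vector_sadd_rdistrib sum.distrib)
    moreover have "?coord (c *s x) = c *s ?coord x"
      by (simp add: scale_left vec.scale_sum_right vector_smult_assoc)
    ultimately show "?coord (x + y) = x + y" and "?coord (c *s x) = c *s x"
      using \<open>?coord x = x\<close> \<open>?coord y = y\<close> by simp_all
  qed simp
  moreover have "?coord (e i) = e i" if "i < p" for i
  proof -
    have "?coord (e i) = (\<Sum>j<p. if i = j then e j else 0)"
      using assms(1) that by (intro sum.cong) (auto simp: orthonormal_def)
    then show ?thesis using that by simp
  qed
  ultimately have "?coord y = y"
    using vec.span_induct[OF assms(2), of "\<lambda>y. ?coord y = y"] by auto
  then show ?thesis by simp
qed

definition normalized :: "complex^'n \<Rightarrow> complex^'n" where
  "normalized u = (1 / sqrt (Re (h u u))) *\<^sub>R u"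

definition orth_residual :: "nat \<Rightarrow> (nat \<Rightarrow> complex^'n) \<Rightarrow> complex^'n \<Rightarrow> complex^'n" where
  "orth_residual k e w = w - (\<Sum>j<k. h w (e j) *s e j)"

primrec gram_schmidt :: "(nat \<Rightarrow> complex^'n) \<Rightarrow> nat \<Rightarrow> nat \<Rightarrow> complex^'n" where
  "gram_schmidt w 0 = (\<lambda>_. 0)"
| "gram_schmidt w (Suc k) =
     (gram_schmidt w k)(k := normalized (orth_residual k (gram_schmidt w k) (w k)))"

lemma normalized_unit:
  assumes "Re (h u u) > 0"
  shows "h (normalized u) (normalized u) = 1"
proof -
  have "h (normalized u) (normalized u) = of_real ((1 / sqrt (Re (h u u)))\<^sup>2 * Re (h u u))"
    by (subst diag_real) (simp add: normalized_def scaleR_eq_of_real_scale scale_left scale_right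
        power2_eq_square)
  then show ?thesis
    using assms by (simp add: power_divide)
qed

lemma orth_residual_orthogonal:
  assumes "orthonormal k e" and "j < k"
  shows "h (orth_residual k e w) (e j) = 0"
proof -
  have "h (\<Sum>l<k. h w (e l) *s e l) (e j) = (\<Sum>l<k. h w (e l) * h (e l) (e j))"
    by (simp add: sum_left scale_left)
  also have "\<dots> = (\<Sum>l<k. if l = j then h w (e l) else 0)"
    using assms by (intro sum.cong) (auto simp: orthonormal_def)
  finally show ?thesis
    using assms(2) by (simp add: orth_residual_def diff_left)
qed

lemma span_orth_residual:
  "vec.span (insert (orth_residual k e w) (e ` {..<k})) = vec.span (insert w (e ` {..<k}))"
proof (rule vec.eq_span_insert_eq)
  have "(\<Sum>j<k. h w (e j) *s e j) \<in> vec.span (e ` {..<k})"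
    by (intro vec.span_sum vec.span_scale vec.span_base) auto
  then show "orth_residual k e w - w \<in> vec.span (e ` {..<k})"
    by (simp add: orth_residual_def vec.span_neg)
qed

lemma orthonormal_fun_upd:
  assumes "orthonormal k e" and "h u u = 1" and "\<And>j. j < k \<Longrightarrow> h u (e j) = 0"
  shows "orthonormal (Suc k) (e(k := u))"
  unfolding orthonormal_def
proof (intro allI impI)
  fix i j assume "i < Suc k" "j < Suc k"
  moreover have "h (e i) u = 0" if "i < k" for i
    using assms(3)[OF that] hermitian[of "e i" u] by simp
  ultimately show "h ((e(k := u)) i) ((e(k := u)) j) = (if i = j then 1 else 0)"
    using assms(1,2,3) by (auto simp: orthonormal_def less_Suc_eq)
qed

lemma orthonormal_derivative_skew:
  assumes "\<And>t. orthonormal p (e t)"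
    and "\<And>k. k < p \<Longrightarrow> ((\<lambda>t. e t k) has_vector_derivative d k) (at t0)"
    and "k < p" and "j < p"
  shows "h (d k) (e t0 j) + h (e t0 k) (d j) = 0"
proof -
  have "((\<lambda>t. h (e t k) (e t j)) has_vector_derivative h (e t0 k) (d j) + h (d k) (e t0 j)) (at t0)"
    using bounded_bilinear.has_vector_derivative[OF bounded_bilinear assms(2)[OF assms(3)]
        assms(2)[OF assms(4)]] .
  moreover have "(\<lambda>t. h (e t k) (e t j)) = (\<lambda>t. if k = j then 1 else 0)"
    using assms(1,3,4) by (simp add: orthonormal_def)
  ultimately have "h (e t0 k) (d j) + h (d k) (e t0 j) = 0"
    using vector_derivative_unique_at has_vector_derivative_const by metis
  then show ?thesis
    by (simp add: add.commute)
qed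

end

locale definite_hermitian_on = hermitian_form h for h :: "complex^'n \<Rightarrow> complex^'n \<Rightarrow> complex" +
  fixes P :: "(complex^'n) set"
  assumes subspace: "vec.subspace P"
    and positive: "x \<in> P \<Longrightarrow> x \<noteq> 0 \<Longrightarrow> Re (h x x) > 0"
begin

lemma orth_residual_mem:
  assumes "\<And>j. j < k \<Longrightarrow> e j \<in> P" and "w \<in> P"
  shows "orth_residual k e w \<in> P"
  unfolding orth_residual_def using assms subspace
  by (intro vec.subspace_diff vec.subspace_sum vec.subspace_scale) auto

lemma orth_residual_positive:
  assumes "\<And>j. j < k \<Longrightarrow> e j \<in> P" and "w \<in> P" and "w \<notin> vec.span (e ` {..<k})"
  shows "Re (h (orth_residual k e w) (orth_residual k e w)) > 0"
proof (rule positive)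
  show "orth_residual k e w \<in> P"
    using assms(1,2) by (rule orth_residual_mem)
  show "orth_residual k e w \<noteq> 0"
    using assms(3) span_orth_residual[of k e w] vec.span_base[of w "insert w (e ` {..<k})"]
    by (metis insertI1 vec.span_insert_0)
qed

lemma gram_schmidt_spec:
  assumes "\<forall>j<p. w j \<in> P" and "vec.independent (w ` {..<p})" and "inj_on w {..<p}"
    and "k \<le> p"
  shows "orthonormal k (gram_schmidt w k)
    \<and> vec.span (gram_schmidt w k ` {..<k}) = vec.span (w ` {..<k})
    \<and> (\<forall>j<k. gram_schmidt w k j \<in> P)"
  using assms(4)
proof (induction k)
  case 0
  then show ?case by (simp add: orthonormal_def)
next
  case (Suc k)
  define e where "e = gram_schmidt w k"
  define r where "r = orth_residual k e (w k)"
  have IH: "orthonormal k e" "vec.span (e ` {..<k}) = vec.span (w ` {..<k})"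
    "\<And>j. j < k \<Longrightarrow> e j \<in> P"
    using Suc unfolding e_def by auto
  have "w k \<notin> vec.span (e ` {..<k})"
    using independent_not_in_span_prefix[OF assms(2,3)] Suc.prems IH(2) by simp
  then have r_pos: "Re (h r r) > 0"
    unfolding r_def using IH(3) assms(1) Suc.prems by (intro orth_residual_positive) auto
  have gs_Suc: "gram_schmidt w (Suc k) = e(k := normalized r)"
    by (simp add: e_def r_def)
  have "orthonormal (Suc k) (e(k := normalized r))"
  proof (rule orthonormal_fun_upd[OF IH(1) normalized_unit[OF r_pos]])
    show "h (normalized r) (e j) = 0" if "j < k" for j
      using orth_residual_orthogonal[OF IH(1) that]
      by (simp add: r_def normalized_def scaleR_eq_of_real_scale scale_left)
  qed
  moreover have "vec.span ((e(k := normalized r)) ` {..<Suc k}) = vec.span (w ` {..<Suc k})"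
  proof -
    have "(e(k := normalized r)) ` {..<Suc k} = insert (normalized r) (e ` {..<k})"
      by (auto simp: lessThan_Suc)
    moreover have "vec.span (insert (normalized r) (e ` {..<k})) = vec.span (insert r (e ` {..<k}))"
      using r_pos by (simp add: normalized_def scaleR_eq_of_real_scale span_insert_scale)
    moreover have "vec.span (insert r (e ` {..<k})) = vec.span (insert (w k) (w ` {..<k}))"
      unfolding r_def span_orth_residual using IH(2) by (rule span_insert_cong)
    ultimately show ?thesis
      by (simp add: lessThan_Suc)
  qed
  moreover have "\<forall>j<Suc k. (e(k := normalized r)) j \<in> P"
  proof -
    have "normalized r \<in> P"
      unfolding r_def normalized_def scaleR_eq_of_real_scale
      using IH(3) assms(1) Suc.prems
      by (intro vec.subspace_scale[OF subspace] orth_residual_mem) auto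
    then show ?thesis
      using IH(3) by (auto simp: less_Suc_eq)
  qed
  ultimately show ?case
    by (simp only: gs_Suc)
qed

lemma gram_schmidt_residual_positive:
  assumes "\<forall>j<p. w j \<in> P" and "vec.independent (w ` {..<p})" and "inj_on w {..<p}"
    and "k < p"
  shows "Re (h (orth_residual k (gram_schmidt w k) (w k))
    (orth_residual k (gram_schmidt w k) (w k))) > 0"
proof -
  have "vec.span (gram_schmidt w k ` {..<k}) = vec.span (w ` {..<k})"
    and "\<forall>j<k. gram_schmidt w k j \<in> P"
    using gram_schmidt_spec[OF assms(1-3)] assms(4) by auto
  with independent_not_in_span_prefix[OF assms(2-4)] assms(1,4) show ?thesis
    by (intro orth_residual_positive) auto
qed

lemma orthonormal_basis_exists:
  assumes "vec.subspace B" and "B \<subseteq> P"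
  obtains e where "orthonormal (vec.dim B) e" and "vec.span (e ` {..<vec.dim B}) = B"
proof -
  obtain S where S: "S \<subseteq> B" "vec.independent S" "B \<subseteq> vec.span S" "card S = vec.dim B"
    using vec.basis_exists by blast
  then obtain w where w: "bij_betw w {..<vec.dim B} S"
    using ex_bij_betw_nat_finite[OF vec.finiteI_independent[OF S(2)]]
    by (auto simp: atLeast0LessThan)
  then have "inj_on w {..<vec.dim B}" and w_image: "w ` {..<vec.dim B} = S"
    by (auto simp: bij_betw_def)
  moreover have "\<forall>j<vec.dim B. w j \<in> P"
    using w_image S(1) assms(2) by blast
  ultimately have "orthonormal (vec.dim B) (gram_schmidt w (vec.dim B))"
    and "vec.span (gram_schmidt w (vec.dim B) ` {..<vec.dim B}) = vec.span S"
    using gram_schmidt_spec[of "vec.dim B" w] S(2) by auto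
  moreover have "vec.span S = B"
    using S(1,3) assms(1) by (rule vec.span_subspace)
  ultimately show ?thesis
    using that by simp
qed

lemma gram_schmidt_differentiable:
  assumes "\<forall>j<p. w t0 j \<in> P" and "vec.independent (w t0 ` {..<p})" and "inj_on (w t0) {..<p}"
    and "\<forall>j<p. (\<lambda>t. w t j) differentiable (at t0)" and "k \<le> p"
  shows "\<forall>j<k. (\<lambda>t. gram_schmidt (w t) k j) differentiable (at t0)"
  using assms(5)
proof (induction k)
  case 0
  then show ?case by simp
next
  case (Suc k)
  define r where "r t = orth_residual k (gram_schmidt (w t) k) (w t k)" for t
  have IH: "\<forall>j<k. (\<lambda>t. gram_schmidt (w t) k j) differentiable (at t0)"
    using Suc by simp
  have "(\<lambda>t. w t k) differentiable (at t0)"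
    using assms(4) Suc.prems by simp
  with IH have r_diff: "r differentiable (at t0)"
    unfolding r_def orth_residual_def
    by (intro differentiable_diff differentiable_sum ballI
        bounded_bilinear.differentiable[OF bounded_bilinear_vector_scale]
        bounded_bilinear.differentiable[OF bounded_bilinear]) auto
  have r_pos: "0 < Re (h (r t0) (r t0))"
    unfolding r_def using Suc.prems assms(1-3) by (intro gram_schmidt_residual_positive) auto
  have "(\<lambda>t. h (r t) (r t)) differentiable (at t0)"
    by (rule bounded_bilinear.differentiable[OF bounded_bilinear r_diff r_diff])
  then have "(\<lambda>t. Re (h (r t) (r t))) differentiable (at t0)"
    by (rule differentiable_compose[OF bounded_linear_imp_differentiable[OF bounded_linear_Re]])
  moreover have "sqrt differentiable (at (Re (h (r t0) (r t0))))"
    using DERIV_real_sqrt[OF r_pos] unfolding differentiable_def has_field_derivative_def by blast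
  ultimately have "(\<lambda>t. sqrt (Re (h (r t) (r t)))) differentiable (at t0)"
    by (rule differentiable_compose[rotated])
  then have "(\<lambda>t. normalized (r t)) differentiable (at t0)"
    unfolding normalized_def using r_pos r_diff
    by (intro differentiable_scaleR differentiable_divide) auto
  then show ?case
    using IH by (auto simp: less_Suc_eq r_def)
qed

end

section \<open>The first variation of the norm of Sigma\<close>

context real_form
begin

definition hkilling :: "complex^'n \<Rightarrow> complex^'n \<Rightarrow> complex" where
  "hkilling x y = killing br x (cj y)"

sublocale hk: hermitian_form hkilling
proof
  show "hkilling (x + y) z = hkilling x z + hkilling y z"
    and "hkilling (c *s x) z = c * hkilling x z" for x y z c
    by (simp_all add: hkilling_def killing_add_left killing_scale_left)
  show "hkilling y x = cnj (hkilling x y)" for x y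
    using killing_conj[of x "cj y"] by (simp add: hkilling_def killing_sym)
qed

lemma bounded_linear_conj: "bounded_linear cj"
  unfolding linear_conv_bounded_linear[symmetric]
  by (rule linearI) (simp_all add: conj_add conj_scale scaleR_eq_of_real_scale)

lemma bounded_bilinear_bracket: "bounded_bilinear br"
  unfolding bilinear_conv_bounded_bilinear[symmetric] bilinear_def
  by (auto intro!: linearI simp: scaleR_eq_of_real_scale bracket_add_left bracket_add_right
      bracket_scale_left bracket_scale_right)

lemma bounded_bilinear_killing: "bounded_bilinear (killing br)"
  unfolding bilinear_conv_bounded_bilinear[symmetric] bilinear_def
  by (auto intro!: linearI simp: scaleR_eq_of_real_scale scaleR_conv_of_real killing_add_left
      killing_add_right killing_scale_left killing_scale_right)

lemma unitary_basis_iff: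
  "unitary_basis br cj B p e \<longleftrightarrow> vec.span (e ` {..<p}) = B \<and> hk.orthonormal p e"
  by (simp add: unitary_basis_def hk.orthonormal_def hkilling_def)

lemma sum_bracket_conj_basis_change:
  assumes e: "hk.orthonormal p e" and f: "hk.orthonormal p f"
    and span: "vec.span (f ` {..<p}) = vec.span (e ` {..<p})"
  shows "(\<Sum>k<p. br (f k) (cj (f k))) = (\<Sum>l<p. br (e l) (cj (e l)))"
proof -
  have f_exp: "f k = (\<Sum>l<p. hkilling (f k) (e l) *s e l)" if "k < p" for k
    using span that by (intro hk.orthonormal_expansion[OF e]) (auto intro: vec.span_base)
  have e_exp: "e l = (\<Sum>k<p. hkilling (e l) (f k) *s f k)" if "l < p" for l
    using that by (intro hk.orthonormal_expansion[OF f]) (simp add: span vec.span_base)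
  have "cj (f k) = (\<Sum>l<p. cnj (hkilling (f k) (e l)) *s cj (e l))" if "k < p" for k
    by (subst f_exp[OF that]) (simp add: conj_sum conj_scale)
  then have "(\<Sum>k<p. br (f k) (cj (f k)))
      = (\<Sum>k<p. \<Sum>l<p. cnj (hkilling (f k) (e l)) *s br (f k) (cj (e l)))"
    by (simp add: bracket_sum_right bracket_scale_right)
  also have "\<dots> = (\<Sum>l<p. br (\<Sum>k<p. hkilling (e l) (f k) *s f k) (cj (e l)))"
    by (subst sum.swap) (simp add: bracket_sum_left bracket_scale_left flip: hk.hermitian)
  also have "\<dots> = (\<Sum>l<p. br (e l) (cj (e l)))"
    using e_exp by simp
  finally show ?thesis .
qed

lemma Sigma_eq:
  assumes "vec.dim B = p" and "hk.orthonormal p e" and "vec.span (e ` {..<p}) = B"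
  shows "Sigma br cj B = \<i> *s (\<Sum>k<p. br (e k) (cj (e k)))"
proof -
  define f where "f = (SOME f. unitary_basis br cj B p f)"
  have "unitary_basis br cj B p e"
    using assms(2,3) by (simp add: unitary_basis_iff)
  then have "unitary_basis br cj B p f"
    unfolding f_def by (rule someI[where P = "unitary_basis br cj B p"])
  then have "(\<Sum>k<p. br (f k) (cj (f k))) = (\<Sum>k<p. br (e k) (cj (e k)))"
    using assms(2,3) unfolding unitary_basis_iff by (intro sum_bracket_conj_basis_change) simp_all
  then show ?thesis
    unfolding Sigma_def Let_def assms(1) f_def by simp
qed

lemma conj_sum_bracket_conj:
  "cj (\<Sum>k\<in>A. br (a k) (cj (b k))) = - (\<Sum>k\<in>A. br (b k) (cj (a k)))"
  by (simp add: conj_sum conj_bracket flip: sum_negf bracket_antisym)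

lemma conj_imaginary_scale: "cj z = - z \<Longrightarrow> cj (\<i> *s z) = \<i> *s z"
  by (simp add: conj_scale)

lemma killing_bracket_conj:
  assumes "cj X = X"
  shows "killing br (br a (cj b)) X = - hkilling a (br X b)"
proof -
  have "killing br (br a (cj b)) X = killing br a (- cj (br X b))"
    using assms by (simp add: killing_invariant conj_bracket flip: bracket_antisym)
  then show ?thesis
    by (simp add: killing_minus_right hkilling_def)
qed

lemma hkilling_bracket_skew:
  assumes "cj X = X"
  shows "hkilling x (br X y) = - hkilling (br X x) y"
proof -
  have "hkilling x (br X y) = - killing br (br x (cj y)) X"
    using assms by (simp add: hkilling_def conj_bracket killing_invariant killing_minus_right
        bracket_antisym[of X "cj y"])
  also have "\<dots> = - hkilling (br X x) y"
    by (simp add: hkilling_def killing_sym[of _ X] flip: killing_invariant)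
  finally show ?thesis .
qed

lemma killing_variation_vanishes:
  assumes e: "hk.orthonormal p e" and X: "cj X = X"
    and stable: "\<And>k. k < p \<Longrightarrow> br X (e k) \<in> vec.span (e ` {..<p})"
    and skew: "\<And>k j. k < p \<Longrightarrow> j < p \<Longrightarrow> hkilling (d k) (e j) + hkilling (e k) (d j) = 0"
  shows "killing br (\<Sum>k<p. br (e k) (cj (d k)) + br (d k) (cj (e k))) X = 0"
proof -
  define c where "c k j = hkilling (br X (e k)) (e j)" for k j
  define A where "A k j = cnj (c k j) * hkilling (d k) (e j)" for k j
  have ad_exp: "br X (e k) = (\<Sum>j<p. c k j *s e j)" if "k < p" for k
    unfolding c_def using stable[OF that] by (rule hk.orthonormal_expansion[OF e])
  \<comment> \<open>c is the matrix of ad X on span e, skew-Hermitian as ad X is skew for hkilling\<close>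
  have c_skew: "c k j = - cnj (c j k)" for k j
    unfolding c_def using hkilling_bracket_skew[OF X, of "e k" "e j"] hk.hermitian[of "e k"]
    by simp
  have "killing br (br (e k) (cj (d k)) + br (d k) (cj (e k))) X
      = (\<Sum>j<p. A j k) - (\<Sum>j<p. A k j)" if "k < p" for k
  proof -
    have "killing br (br (e k) (cj (d k)) + br (d k) (cj (e k))) X
        = hkilling (br X (e k)) (d k) - hkilling (d k) (br X (e k))"
      by (simp add: killing_add_left killing_bracket_conj[OF X] hkilling_bracket_skew[OF X])
    also have "hkilling (br X (e k)) (d k) = (\<Sum>j<p. c k j * hkilling (e j) (d k))"
      unfolding ad_exp[OF that] by (simp add: hk.sum_left hk.scale_left)
    also have "\<dots> = (\<Sum>j<p. A j k)"
    proof (rule sum.cong)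
      fix j assume "j \<in> {..<p}"
      then have "hkilling (e j) (d k) = - hkilling (d j) (e k)"
        using skew[of j k] that by (simp add: add_eq_0_iff)
      then show "c k j * hkilling (e j) (d k) = A j k"
        unfolding A_def c_skew[of k j] by simp
    qed simp
    also have "hkilling (d k) (br X (e k)) = (\<Sum>j<p. A k j)"
      unfolding ad_exp[OF that] A_def by (simp add: hk.sum_right hk.scale_right)
    finally show ?thesis .
  qed
  then have "killing br (\<Sum>k<p. br (e k) (cj (d k)) + br (d k) (cj (e k))) X
      = (\<Sum>k<p. \<Sum>j<p. A j k) - (\<Sum>k<p. \<Sum>j<p. A k j)"
    by (simp add: killing_sum_left sum_subtractf)
  then show ?thesis
    by (simp flip: sum.swap[of A])
qed

lemma lnormsq_has_derivative:
  assumes "(S has_vector_derivative S') (at t0)" and "cj (S t0) = S t0" and "cj S' = S'"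
  shows "((\<lambda>t. lnormsq br cj (S t)) has_real_derivative - 2 * Re (killing br S' (S t0))) (at t0)"
proof -
  have "((\<lambda>t. cj (S t)) has_vector_derivative cj S') (at t0)"
    by (rule bounded_linear.has_vector_derivative[OF bounded_linear_conj assms(1)])
  then have "((\<lambda>t. killing br (S t) (cj (S t))) has_vector_derivative
      killing br (S t0) (cj S') + killing br S' (cj (S t0))) (at t0)"
    by (rule bounded_bilinear.has_vector_derivative[OF bounded_bilinear_killing assms(1)])
  then have "((\<lambda>t. - Re (killing br (S t) (cj (S t)))) has_vector_derivative
      - Re (killing br (S t0) (cj S') + killing br S' (cj (S t0)))) (at t0)"
    by (intro has_vector_derivative_minus
        bounded_linear.has_vector_derivative[OF bounded_linear_Re])
  moreover have "- Re (killing br (S t0) (cj S') + killing br S' (cj (S t0)))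
      = - 2 * Re (killing br S' (S t0))"
    using assms(2,3) by (simp add: killing_sym[of "S t0"])
  ultimately show ?thesis
    by (simp add: lnormsq_def has_real_derivative_iff_has_vector_derivative)
qed

lemma lnormsq_orthonormal_frame_critical:
  assumes e: "\<And>t. hk.orthonormal p (e t)"
    and d: "\<And>k. k < p \<Longrightarrow> ((\<lambda>t. e t k) has_vector_derivative d k) (at t0)"
    and stable: "\<And>k. k < p \<Longrightarrow>
      br (\<i> *s (\<Sum>l<p. br (e t0 l) (cj (e t0 l)))) (e t0 k) \<in> vec.span (e t0 ` {..<p})"
  shows "((\<lambda>t. lnormsq br cj (\<i> *s (\<Sum>k<p. br (e t k) (cj (e t k))))) has_real_derivative 0) (at t0)"
proof -
  define S where "S t = \<i> *s (\<Sum>k<p. br (e t k) (cj (e t k)))" for t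
  define Z where "Z = (\<Sum>k<p. br (e t0 k) (cj (d k)) + br (d k) (cj (e t0 k)))"
  have "((\<lambda>t. br (e t k) (cj (e t k))) has_vector_derivative
      br (e t0 k) (cj (d k)) + br (d k) (cj (e t0 k))) (at t0)" if "k < p" for k
    using bounded_bilinear.has_vector_derivative[OF bounded_bilinear_bracket d[OF that]
        bounded_linear.has_vector_derivative[OF bounded_linear_conj d[OF that]]] .
  then have "(S has_vector_derivative \<i> *s Z) (at t0)"
    unfolding S_def Z_def
    by (intro bounded_linear.has_vector_derivative[OF
          bounded_bilinear.bounded_linear_right[OF bounded_bilinear_vector_scale]]
        has_vector_derivative_sum) auto
  moreover have "cj (S t0) = S t0"
    unfolding S_def by (rule conj_imaginary_scale) (simp add: conj_sum_bracket_conj)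
  moreover have "cj (\<i> *s Z) = \<i> *s Z"
    unfolding Z_def
    by (rule conj_imaginary_scale) (simp add: sum.distrib conj_add conj_sum_bracket_conj)
  ultimately have "((\<lambda>t. lnormsq br cj (S t)) has_real_derivative
      - 2 * Re (killing br (\<i> *s Z) (S t0))) (at t0)"
    by (rule lnormsq_has_derivative)
  moreover have "killing br Z (S t0) = 0"
    unfolding Z_def
  proof (rule killing_variation_vanishes[OF e])
    show "cj (S t0) = S t0" by fact
    show "br (S t0) (e t0 k) \<in> vec.span (e t0 ` {..<p})" if "k < p" for k
      unfolding S_def using stable[OF that] .
    show "hkilling (d k) (e t0 j) + hkilling (e t0 k) (d j) = 0" if "k < p" "j < p" for k j
      using hk.orthonormal_derivative_skew[OF e d that] .
  qed
  ultimately show ?thesis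
    by (simp add: S_def killing_scale_left)
qed

end

section \<open>Pointed bounded symmetric domains and their embeddings\<close>

locale pointed_bsd =
  fixes br :: "complex^'n \<Rightarrow> complex^'n \<Rightarrow> complex^'n" and cj :: "complex^'n \<Rightarrow> complex^'n"
    and L P :: "(complex^'n) set" and H0 :: "complex^'n"
  assumes bsd_data: "bsd_data br cj L P H0"
begin

sublocale real_form br cj
  using bsd_data by unfold_locales (simp_all add: bsd_data_def)

lemma subspace_L: "vec.subspace L"
  and subspace_P: "vec.subspace P"
  using bsd_data by (simp_all add: bsd_data_def)

lemma conj_P: "x \<in> P \<Longrightarrow> cj x \<in> P"
  and bracket_P_P: "x \<in> P \<Longrightarrow> y \<in> P \<Longrightarrow> br x y \<in> L"
  and bracket_L_P: "x \<in> L \<Longrightarrow> y \<in> P \<Longrightarrow> br x y \<in> P"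
  and killing_P_positive: "x \<in> P \<Longrightarrow> cj x = x \<Longrightarrow> x \<noteq> 0 \<Longrightarrow> Re (killing br x x) > 0"
  and H0_central: "x \<in> L \<Longrightarrow> br H0 x = 0"
  and H0_complex_structure: "x \<in> P \<Longrightarrow> br H0 (br H0 x) = - x"
  using bsd_data by (auto simp: bsd_data_def)

lemma decomposition: "\<exists>a\<in>L. \<exists>b\<in>P. x = a + b"
  using bsd_data by (simp add: bsd_data_def)

lemma hkilling_P_positive:
  assumes "x \<in> P" and "x \<noteq> 0"
  shows "Re (hkilling x x) > 0"
proof -
  define a where "a = (1/2) *s (x + cj x)"
  define b where "b = (- \<i>/2) *s (x - cj x)"
  have x_ab: "x = a + \<i> *s b"
    unfolding a_def b_def by (simp add: vec_eq_iff field_simps)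
  have real_a: "cj a = a" and real_b: "cj b = b"
    unfolding a_def b_def by (simp_all add: conj_scale conj_add conj_diff vec_eq_iff field_simps)
  have "a \<in> P" and "b \<in> P"
    unfolding a_def b_def using assms(1) conj_P[OF assms(1)] subspace_P
    by (simp_all add: vec.subspace_add vec.subspace_diff vec.subspace_scale)
  have "hkilling x x = killing br a a + killing br b b"
    unfolding hkilling_def x_ab
    by (simp add: conj_add conj_scale real_a real_b killing_add_left killing_diff_right
        killing_scale_left killing_scale_right killing_sym[of b a] algebra_simps)
  moreover have "Re (killing br y y) \<ge> 0" if "y \<in> P" "cj y = y" for y
    using killing_P_positive[OF that] by (cases "y = 0") (auto simp: killing_def)
  moreover have "a \<noteq> 0 \<or> b \<noteq> 0"
    using x_ab assms(2) by auto
  then have "Re (killing br a a) > 0 \<or> Re (killing br b b) > 0"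
    using killing_P_positive \<open>a \<in> P\<close> \<open>b \<in> P\<close> real_a real_b by blast
  ultimately show ?thesis
    using \<open>a \<in> P\<close> \<open>b \<in> P\<close> real_a real_b by force
qed

sublocale hk: definite_hermitian_on hkilling P
  by unfold_locales (simp_all add: subspace_P hkilling_P_positive)

lemma pplus_subspace: "vec.subspace (pplus br P H0)"
  unfolding vec.subspace_def pplus_def using subspace_P
  by (auto simp: vec.subspace_add vec.subspace_scale vec.subspace_0 bracket_add_right
      bracket_scale_right vector_add_ldistrib vector_smult_assoc mult.commute)

lemma pplus_subset_P: "pplus br P H0 \<subseteq> P"
  by (auto simp: pplus_def)

lemma bracket_L_pplus:
  assumes X: "X \<in> L" and b: "b \<in> pplus br P H0"
  shows "br X b \<in> pplus br P H0"
proof -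
  have "b \<in> P" and H0_b: "br H0 b = \<i> *s b"
    using b by (auto simp: pplus_def)
  have "br H0 (br X b) = br (br H0 X) b + br X (br H0 b)"
    using bracket_bracket_left[of H0 X b] by simp
  also have "\<dots> = \<i> *s br X b"
    by (simp add: H0_b H0_central[OF X] bracket_scale_right)
  finally show ?thesis
    using bracket_L_P[OF X \<open>b \<in> P\<close>] by (simp add: pplus_def)
qed

lemma Sigma_sum_mem_L:
  assumes "\<And>k. k < p \<Longrightarrow> f k \<in> pplus br P H0"
  shows "\<i> *s (\<Sum>k<p. br (f k) (cj (f k))) \<in> L"
proof -
  have "br (f k) (cj (f k)) \<in> L" if "k < p" for k
    using assms[OF that] pplus_subset_P by (auto intro: bracket_P_P conj_P)
  then show ?thesis
    using subspace_L by (intro vec.subspace_scale vec.subspace_sum) auto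
qed

lemma Gr_critical_if_Sigma_stabilizes:
  assumes B: "B \<in> Gr p br P H0" and stable: "\<And>b. b \<in> B \<Longrightarrow> br (Sigma br cj B) b \<in> B"
  shows "Gr_critical p br P H0 (\<lambda>B. lnormsq br cj (Sigma br cj B)) B"
  unfolding Gr_critical_def
proof (intro conjI allI impI)
  show "B \<in> Gr p br P H0" by fact
  fix v :: "real \<Rightarrow> nat \<Rightarrow> complex^'n"
  assume "(\<forall>t. \<forall>k<p. v t k \<in> pplus br P H0) \<and>
    (\<forall>t. inj_on (v t) {..<p} \<and> vec.independent (v t ` {..<p})) \<and>
    vec.span (v 0 ` {..<p}) = B \<and> (\<forall>k<p. (\<lambda>t. v t k) differentiable (at 0))"
  then have v_P: "\<forall>k<p. v t k \<in> P" and v_inj: "inj_on (v t) {..<p}"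
    and v_indep: "vec.independent (v t ` {..<p})" and v0: "vec.span (v 0 ` {..<p}) = B"
    and v_diff: "\<forall>k<p. (\<lambda>t. v t k) differentiable (at 0)" for t
    using pplus_subset_P by blast+
  define e where "e t = hk.gram_schmidt (v t) p" for t
  have e_orthonormal: "hk.orthonormal p (e t)"
    and e_span: "vec.span (e t ` {..<p}) = vec.span (v t ` {..<p})" for t
    using hk.gram_schmidt_spec[OF v_P v_indep v_inj] unfolding e_def by auto
  have "vec.dim (vec.span (v t ` {..<p})) = p" for t
    using v_inj v_indep by (simp add: vec.dim_eq_card_independent card_image)
  then have Sigma_v: "Sigma br cj (vec.span (v t ` {..<p})) = \<i> *s (\<Sum>k<p. br (e t k) (cj (e t k)))"
    for t using Sigma_eq e_orthonormal e_span by blast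
  define d where "d k = vector_derivative (\<lambda>t. e t k) (at 0)" for k
  have e_deriv: "((\<lambda>t. e t k) has_vector_derivative d k) (at 0)" if "k < p" for k
    using hk.gram_schmidt_differentiable[OF v_P v_indep v_inj v_diff order.refl] that
    unfolding d_def e_def by (simp add: vector_derivative_works)
  have e0_stable: "br (\<i> *s (\<Sum>l<p. br (e 0 l) (cj (e 0 l)))) (e 0 k) \<in> vec.span (e 0 ` {..<p})"
    if "k < p" for k
    using stable[of "e 0 k"] that Sigma_v[of 0] e_span[of 0] v0 by (auto intro: vec.span_base)
  have "((\<lambda>t. lnormsq br cj (\<i> *s (\<Sum>k<p. br (e t k) (cj (e t k))))) has_real_derivative 0) (at 0)"
    using lnormsq_orthonormal_frame_critical[OF e_orthonormal e_deriv e0_stable] .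
  then show "((\<lambda>t. lnormsq br cj (Sigma br cj (vec.span (v t ` {..<p}))))
      has_real_derivative 0) (at 0)"
    by (simp only: Sigma_v)
qed

end

locale bsd_embedding =
  G: pointed_bsd br cj L P H0 + G': pointed_bsd br' cj' L' P' H0'
  for br :: "complex^'n \<Rightarrow> complex^'n \<Rightarrow> complex^'n" and cj L P H0
    and br' :: "complex^'m \<Rightarrow> complex^'m \<Rightarrow> complex^'m" and cj' L' P' H0' +
  fixes \<rho> :: "complex^'m \<Rightarrow> complex^'n"
  assumes linear: "Vector_Spaces.linear (*s) (*s) \<rho>"
    and inj: "inj \<rho>"
    and conj: "\<rho> (cj' x) = cj (\<rho> x)"
    and bracket: "\<rho> (br' x y) = br (\<rho> x) (\<rho> y)"
    and bracket_H0: "br H0 (\<rho> x) = \<rho> (br' H0' x)"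
begin

lemma image_pplus:
  assumes x: "x \<in> pplus br' P' H0'"
  shows "\<rho> x \<in> pplus br P H0"
proof -
  have H0_x: "br H0 (\<rho> x) = \<i> *s \<rho> x"
    using x by (simp add: pplus_def bracket_H0 vec.linear_scale[OF linear])
  obtain a b where "a \<in> L" "b \<in> P" and ab: "\<rho> x = a + b"
    using G.decomposition by blast
  have "- \<rho> x = br H0 (br H0 (\<rho> x))"
    by (simp add: H0_x G.bracket_scale_right)
  also have "\<dots> = - b"
    by (simp add: ab G.bracket_add_right G.H0_central[OF \<open>a \<in> L\<close>]
        G.H0_complex_structure[OF \<open>b \<in> P\<close>])
  finally show ?thesis
    using \<open>b \<in> P\<close> H0_x by (simp add: pplus_def)
qed

lemma image_pplus_Gr:
  "\<rho> ` pplus br' P' H0' \<in> Gr (vec.dim (pplus br' P' H0')) br P H0"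
proof -
  have "vec.subspace (\<rho> ` pplus br' P' H0')"
    using G'.pplus_subspace by (rule vec.linear_subspace_image[OF linear])
  moreover have "vec.dim (\<rho> ` pplus br' P' H0') = vec.dim (pplus br' P' H0')"
    using inj by (intro vec.dim_image_eq[OF linear]) (simp add: inj_on_def inj_def)
  ultimately show ?thesis
    using image_pplus by (auto simp: Gr_def)
qed

lemma Sigma_image_pplus_stabilizes:
  assumes "b \<in> \<rho> ` pplus br' P' H0'"
  shows "br (Sigma br cj (\<rho> ` pplus br' P' H0')) b \<in> \<rho> ` pplus br' P' H0'"
proof -
  define B where "B = \<rho> ` pplus br' P' H0'"
  define p where "p = vec.dim B"
  have "vec.subspace B" and "B \<subseteq> P"
    using image_pplus_Gr G.pplus_subset_P unfolding B_def by (auto simp: Gr_def)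
  then obtain e where e: "G.hk.orthonormal p e" "vec.span (e ` {..<p}) = B"
    unfolding p_def by (rule G.hk.orthonormal_basis_exists)
  then have "\<exists>f. f \<in> pplus br' P' H0' \<and> e k = \<rho> f" if "k < p" for k
    using that vec.span_base[of "e k" "e ` {..<p}"] unfolding B_def by auto
  then obtain f where f: "f k \<in> pplus br' P' H0'" "e k = \<rho> (f k)" if "k < p" for k
    by metis
  define X' where "X' = \<i> *s (\<Sum>k<p. br' (f k) (cj' (f k)))"
  have "Sigma br cj B = \<i> *s (\<Sum>k<p. br (e k) (cj (e k)))"
    using G.Sigma_eq[OF p_def[symmetric] e] .
  also have "\<dots> = \<rho> X'"
    by (simp add: X'_def f(2) conj bracket vec.linear_scale[OF linear] vec.linear_sum[OF linear])
  finally have "Sigma br cj B = \<rho> X'" .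
  moreover obtain c where "c \<in> pplus br' P' H0'" and "b = \<rho> c"
    using assms by blast
  ultimately have "br (Sigma br cj B) b = \<rho> (br' X' c)"
    by (simp add: bracket)
  moreover have "br' X' c \<in> pplus br' P' H0'"
    unfolding X'_def using G'.Sigma_sum_mem_L f(1) \<open>c \<in> pplus br' P' H0'\<close>
    by (intro G'.bracket_L_pplus) auto
  ultimately show ?thesis
    unfolding B_def by simp
qed

end

theorem lemma7:
  fixes br :: "complex^'n \<Rightarrow> complex^'n \<Rightarrow> complex^'n" and cj :: "complex^'n \<Rightarrow> complex^'n"
    and L P :: "(complex^'n) set" and H0 :: "complex^'n"
    and br' :: "complex^'m \<Rightarrow> complex^'m \<Rightarrow> complex^'m" and cj' :: "complex^'m \<Rightarrow> complex^'m"
    and L' P' :: "(complex^'m) set" and H0' :: "complex^'m"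
    and \<rho> :: "complex^'m \<Rightarrow> complex^'n"
  assumes "bsd_data br cj L P H0"
    and "bsd_data br' cj' L' P' H0'"
    and "Vector_Spaces.linear (*s) (*s) \<rho>"
    and "inj \<rho>"
    and "\<forall>x. \<rho> (cj' x) = cj (\<rho> x)"
    and "\<forall>x y. \<rho> (br' x y) = br (\<rho> x) (\<rho> y)"
    and "\<forall>x. br H0 (\<rho> x) = \<rho> (br' H0' x)"
  shows "Gr_critical (vec.dim (pplus br' P' H0')) br P H0
           (\<lambda>B. lnormsq br cj (Sigma br cj B)) (\<rho> ` pplus br' P' H0')"
proof -
  interpret bsd_embedding br cj L P H0 br' cj' L' P' H0' \<rho>
    using assms by (simp add: bsd_embedding_def bsd_embedding_axioms_def pointed_bsd_def)
  show ?thesis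
    using image_pplus_Gr Sigma_image_pplus_stabilizes by (rule G.Gr_critical_if_Sigma_stabilizes)
qed

end
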